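(* Over any field $\mathbb{F}$, the $16\times16$ Walsh–Hadamard matrix $H_4$ satisfies $\mathcal{R}_{H_4}(1)\le 96$.
   Context: $H_1=\begin{bmatrix}1&1\\1&-1\end{bmatrix}$, $H_n=H_1^{\otimes n}$. $\mathcal{R}_A(r)=\min\{\mathrm{nnz}(B):\mathrm{rank}(A+B)\le r\}$ is the rank-$r$ rigidity over $\mathbb{F}$. *)

theory Defs
  imports "Jordan_Normal_Form.DL_Rank"
begin

definition kron :: "'a::semiring_1 mat \<Rightarrow> 'a mat \<Rightarrow> 'a mat" where
  "kron A B = mat (dim_row A * dim_row B) (dim_col A * dim_col B)
     (\<lambda>(i,j). A $$ (i div dim_row B, j div dim_col B) * B $$ (i mod dim_row B, j mod dim_col B))"

definition hadamard1 :: "'a::ring_1 mat" where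
  "hadamard1 = mat_of_rows_list 2 [[1, 1], [1, -1]]"

fun hadamard :: "nat \<Rightarrow> 'a::ring_1 mat" where
  "hadamard 0 = 1\<^sub>m 1"
| "hadamard (Suc n) = kron hadamard1 (hadamard n)"

definition nnz :: "'a::zero mat \<Rightarrow> nat" where
  "nnz B = card {(i,j). i < dim_row B \<and> j < dim_col B \<and> B $$ (i,j) \<noteq> 0}"

definition rigidity :: "'a::field mat \<Rightarrow> nat \<Rightarrow> nat" where
  "rigidity A r = Inf {nnz B | B. B \<in> carrier_mat (dim_row A) (dim_col A)
       \<and> vec_space.rank (dim_row A) (A + B) \<le> r}"

end

theory Submission
  imports Defs
begin

text \<open>The entry of \<open>H\<^sub>4\<close> at \<open>(i, j)\<close> is \<open>(-1)\<close> raised to the inner product of the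
  binary digit vectors of \<open>i\<close> and \<open>j\<close>. For the bent function \<open>f(x) = x\<^sub>0x\<^sub>1 + x\<^sub>2x\<^sub>3\<close>
  (on the binary digits of \<open>x\<close>) the rank-one matrix with entries \<open>(-1)\<close> raised to
  \<open>f(i) + f(j)\<close> differs from \<open>H\<^sub>4\<close> in exactly 96 of the 256 positions, a finite check.
  Over a field of characteristic 2 the signs collapse and there are even fewer changes.\<close>

lemma rigidity_le_nnz:
  assumes "B \<in> carrier_mat (dim_row A) (dim_col A)"
    and "vec_space.rank (dim_row A) (A + B) \<le> r"
  shows "rigidity A r \<le> nnz B"
  unfolding rigidity_def by (rule cInf_lower) (use assms in auto)

lemma rigidity_one_le_card_mismatch:
  fixes A :: "'a::field mat" and f g :: "nat \<Rightarrow> 'a"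
  assumes A: "A \<in> carrier_mat n m"
  shows "rigidity A 1 \<le> card {(i, j). i < n \<and> j < m \<and> A $$ (i, j) \<noteq> f i * g j}"
proof -
  define B where "B = mat n m (\<lambda>(i, j). f i * g j - A $$ (i, j))"
  have B_carrier: "B \<in> carrier_mat (dim_row A) (dim_col A)"
    using A by (simp add: B_def)
  have sum_eq: "A + B = mat n m (\<lambda>(i, j). f i * g j)"
    using A by (intro eq_matI) (auto simp: B_def)
  have "vec_space.rank (dim_row A) (A + B) \<le> 1"
    unfolding sum_eq using A
    by (intro vec_space.rank_le_1_product_entries[where f = f and g = g and nc = m]) auto
  then have "rigidity A 1 \<le> nnz B"
    by (rule rigidity_le_nnz[OF B_carrier])
  also have "nnz B = card {(i, j). i < n \<and> j < m \<and> A $$ (i, j) \<noteq> f i * g j}"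
    unfolding nnz_def by (rule arg_cong[where f = card]) (auto simp: B_def)
  finally show ?thesis .
qed

definition sign_of :: "bool \<Rightarrow> 'a::ring_1" where
  "sign_of b = (if b then -1 else 1)"

lemma sign_of_mult: "sign_of a * (sign_of b :: 'a::ring_1) = sign_of (a \<noteq> b)"
  by (auto simp: sign_of_def)

lemma card_sign_mismatch_le:
  fixes A :: "'a::ring_1 mat"
  assumes "\<And>i j. i < n \<Longrightarrow> j < m \<Longrightarrow> A $$ (i, j) = sign_of (p i j)"
  shows "card {(i, j). i < n \<and> j < m \<and> A $$ (i, j) \<noteq> sign_of (b i) * sign_of (c j)}
    \<le> card {(i, j). i < n \<and> j < m \<and> (b i \<noteq> c j) \<noteq> p i j}"
proof (rule card_mono)
  show "finite {(i, j). i < n \<and> j < m \<and> (b i \<noteq> c j) \<noteq> p i j}"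
    by (rule finite_subset[of _ "{..<n} \<times> {..<m}"]) auto
  show "{(i, j). i < n \<and> j < m \<and> A $$ (i, j) \<noteq> sign_of (b i) * sign_of (c j)}
      \<subseteq> {(i, j). i < n \<and> j < m \<and> (b i \<noteq> c j) \<noteq> p i j}"
    using assms by (auto simp: sign_of_mult) (metis (full_types))+
qed

text \<open>The inner product mod 2 of the lowest \<open>n\<close> binary digits, peeled off from the most
  significant one to match the Kronecker recursion.\<close>

fun hadamard_parity :: "nat \<Rightarrow> nat \<Rightarrow> nat \<Rightarrow> bool" where
  "hadamard_parity 0 i j = False"
| "hadamard_parity (Suc n) i j =
    ((i div 2 ^ n = 1 \<and> j div 2 ^ n = 1) \<noteq> hadamard_parity n (i mod 2 ^ n) (j mod 2 ^ n))"

lemma dim_hadamard1 [simp]: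
  "dim_row (hadamard1 :: 'a::ring_1 mat) = 2" "dim_col (hadamard1 :: 'a::ring_1 mat) = 2"
  by (simp_all add: hadamard1_def mat_of_rows_list_def)

lemma hadamard1_entry:
  "i < 2 \<Longrightarrow> j < 2 \<Longrightarrow> (hadamard1 :: 'a::ring_1 mat) $$ (i, j) = sign_of (i = 1 \<and> j = 1)"
  by (auto simp: hadamard1_def mat_of_rows_list_def sign_of_def less_2_cases_iff)

lemma dim_hadamard [simp]:
  "dim_row (hadamard n :: 'a::ring_1 mat) = 2 ^ n" "dim_col (hadamard n :: 'a::ring_1 mat) = 2 ^ n"
  by (induction n) (simp_all add: kron_def)

lemma hadamard_carrier: "(hadamard n :: 'a::ring_1 mat) \<in> carrier_mat (2 ^ n) (2 ^ n)"
  by (intro carrier_matI) simp_all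

lemma hadamard_entry:
  assumes "i < 2 ^ n" "j < 2 ^ n"
  shows "(hadamard n :: 'a::ring_1 mat) $$ (i, j) = sign_of (hadamard_parity n i j)"
  using assms
proof (induction n arbitrary: i j)
  case 0
  then show ?case by (simp add: sign_of_def)
next
  case (Suc n)
  have digits: "i div 2 ^ n < 2" "j div 2 ^ n < 2"
    using Suc.prems by (auto simp: less_mult_imp_div_less)
  have "(hadamard (Suc n) :: 'a mat) $$ (i, j) =
      hadamard1 $$ (i div 2 ^ n, j div 2 ^ n) * (hadamard n :: 'a mat) $$ (i mod 2 ^ n, j mod 2 ^ n)"
    using Suc.prems by (simp add: kron_def)
  also have "\<dots> = sign_of (hadamard_parity (Suc n) i j)"
    by (simp add: hadamard1_entry[OF digits] Suc.IH sign_of_mult)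
  finally show ?case .
qed

definition bent4 :: "nat \<Rightarrow> bool" where
  "bent4 x = ((x mod 2 = 1 \<and> x div 2 mod 2 = 1) \<noteq> (x div 4 mod 2 = 1 \<and> x div 8 mod 2 = 1))"

lemma card_bent4_mismatch:
  "card {(i, j). i < 16 \<and> j < (16::nat) \<and> (bent4 i \<noteq> bent4 j) \<noteq> hadamard_parity 4 i j} \<le> 96"
proof -
  let ?mismatch = "\<lambda>(i, j). (bent4 i \<noteq> bent4 j) \<noteq> hadamard_parity 4 i j"
  have "{(i, j). i < 16 \<and> j < (16::nat) \<and> (bent4 i \<noteq> bent4 j) \<noteq> hadamard_parity 4 i j}
      = set (filter ?mismatch (List.product [0..<16] [0..<16]))"
    by auto
  also have "card \<dots> \<le> length (filter ?mismatch (List.product [0..<16] [0..<16]))"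
    by (rule card_length)
  also have "\<dots> = 96"
    by code_simp
  finally show ?thesis .
qed

theorem mainTheorem8:
  "rigidity (hadamard 4 :: 'a::field mat) 1 \<le> 96"
proof -
  let ?H = "hadamard 4 :: 'a mat"
  have entry: "?H $$ (i, j) = sign_of (hadamard_parity 4 i j)" if "i < 16" "j < 16" for i j
    using hadamard_entry[of i 4 j] that by simp
  have carrier: "?H \<in> carrier_mat 16 16"
    using hadamard_carrier[of 4] by simp
  have "rigidity ?H 1
      \<le> card {(i, j). i < 16 \<and> j < 16 \<and> ?H $$ (i, j) \<noteq> sign_of (bent4 i) * sign_of (bent4 j)}"
    using carrier by (rule rigidity_one_le_card_mismatch)
  also have "\<dots> \<le> card {(i, j). i < 16 \<and> j < 16 \<and> (bent4 i \<noteq> bent4 j) \<noteq> hadamard_parity 4 i j}"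
    using entry by (rule card_sign_mismatch_le)
  also have "\<dots> \<le> 96"
    by (rule card_bent4_mismatch)
  finally show ?thesis .
qed

end
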